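(* Let $\Theta=\{1,\ldots,M\}$ be a finite universe of $M$ elements, let $\mathbf{p}=[p_1,\ldots,p_M]$ be a probability mass function on $\Theta$, and let $\mathbf{R}=\{r_{mn}\}_{m,n=1}^M$ be a stochastic matrix (noise channel). Define $\tilde{p}_n=\sum_{m=1}^M p_m r_{mn}$ and $\tilde{\mathbf p}=[\tilde p_1,\ldots,\tilde p_M]$. Let $\mathbf{q}=[q_1,\ldots,q_M]$ be a vector of real quality values. Let $\Theta_0\subset\Theta$ be a fixed initial set. For $t=1,2,\ldots$, let $\theta_t$ be drawn from $\mathbf{p}$ and let $\hat{\theta}_t\in\Theta$ satisfy $\Pr(\hat{\theta}_t=n\mid\theta_t=m)=r_{mn}$, with the pairs $(\theta_t,\hat\theta_t)$ independent across $t$. Set $\Theta_t=\Theta_{t-1}\cup\{\hat{\theta}_t\}$ and $Q_t=\sum_{\theta\in\Theta_t}q_\theta$. For $k\ge 1$ define the $k$th-order quality-prevalence function $D^k_{\Theta_0}(\tilde{\mathbf{p}},\mathbf{q})=\sum_{\theta\notin\Theta_0}q_\theta\tilde{p}_\theta^k$. Then for every positive integer $T$, $$E[Q_T\mid\Theta_0]=Q_0-\sum_{k=1}^T(-1)^k\binom{T}{k}D^k_{\Theta_0}(\tilde{\mathbf{p}},\mathbf{q}).$$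
   Context: This models technology-aided discovery: an explorer initially knows $\Theta_0$; at each step an element is drawn according to $\mathbf p$, a supporting technology reports a noisy identification $\hat\theta_t$ with misclassification probabilities $r_{mn}$, and the explorer adds $\hat\theta_t$ to her known set. Each element $\theta$ has quality $q_\theta$, and $Q_t$ is the total quality of the known set at time $t$ (so $Q_0=\sum_{\theta\in\Theta_0}q_\theta$). *)

theory Defs
  imports "HOL-Probability.Probability"
begin

text \<open>Universe is {1..M}. The pmf p gives p_m = pmf p m; the channel R gives
  r_mn = pmf (R m) n.\<close>

definition step_pmf :: "nat pmf \<Rightarrow> (nat \<Rightarrow> nat pmf) \<Rightarrow> (nat \<times> nat) pmf" where
  "step_pmf p R = do { m \<leftarrow> p; n \<leftarrow> R m; return_pmf (m, n) }"

definition samples_pmf :: "nat pmf \<Rightarrow> (nat \<Rightarrow> nat pmf) \<Rightarrow> nat \<Rightarrow> (nat \<Rightarrow> nat \<times> nat) pmf" where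
  "samples_pmf p R T = Pi_pmf {1..T} (0, 0) (\<lambda>_. step_pmf p R)"

definition known_set :: "nat set \<Rightarrow> (nat \<Rightarrow> nat \<times> nat) \<Rightarrow> nat \<Rightarrow> nat set" where
  "known_set \<Theta>0 \<omega> T = \<Theta>0 \<union> (\<lambda>t. snd (\<omega> t)) ` {1..T}"

definition total_quality :: "(nat \<Rightarrow> real) \<Rightarrow> nat set \<Rightarrow> real" where
  "total_quality q S = (\<Sum>\<theta>\<in>S. q \<theta>)"

definition ptilde :: "nat \<Rightarrow> nat pmf \<Rightarrow> (nat \<Rightarrow> nat pmf) \<Rightarrow> nat \<Rightarrow> real" where
  "ptilde M p R n = (\<Sum>m\<in>{1..M}. pmf p m * pmf (R m) n)"

definition quality_prevalence :: "nat \<Rightarrow> nat \<Rightarrow> nat set \<Rightarrow> (nat \<Rightarrow> real) \<Rightarrow> (nat \<Rightarrow> real) \<Rightarrow> real" where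
  "quality_prevalence M k \<Theta>0 pt q = (\<Sum>\<theta>\<in>{1..M} - \<Theta>0. q \<theta> * pt \<theta> ^ k)"

end

theory Submission
  imports Defs
begin

(* An element outside Theta0 is missing from the known set at time T exactly when none of
   the T independent reports equals it, which has probability (1 - ptilde_theta)^T, ptilde_theta
   being the probability that a single report equals theta. Hence E[Q_T] - Q_0 is
   sum_theta q_theta (1 - (1 - ptilde_theta)^T), and expanding (1 - ptilde_theta)^T binomially
   gives the alternating sum of the quality-prevalence functions. *)

lemma one_minus_power_eq_binomial_sum:
  fixes x :: "'a :: comm_ring_1"
  shows "1 - (1 - x) ^ T = - (\<Sum>k=1..T. (-1) ^ k * of_nat (T choose k) * x ^ k)"
proof -
  have "(1 - x) ^ T = (\<Sum>k\<le>T. of_nat (T choose k) * (-x) ^ k * 1 ^ (T - k))"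
    using binomial_ring[of "-x" 1 T] by (simp add: add.commute)
  also have "\<dots> = (\<Sum>k\<le>T. (-1) ^ k * of_nat (T choose k) * x ^ k)"
    by (intro sum.cong refl) (simp add: power_minus[of x] mult_ac)
  also have "\<dots> = 1 + (\<Sum>k=1..T. (-1) ^ k * of_nat (T choose k) * x ^ k)"
    by (simp add: atMost_atLeast0 sum.atLeast_Suc_atMost)
  finally show ?thesis by simp
qed

lemma sum_union_eq_sum_indicator:
  fixes f :: "'a \<Rightarrow> 'b :: semiring_1"
  assumes "finite X" "A \<subseteq> X" "H \<subseteq> X"
  shows "sum f (A \<union> H) = sum f A + (\<Sum>x\<in>X - A. f x * indicator H x)"
proof -
  have "sum f (A \<union> H) = sum f A + sum f ((X - A) \<inter> H)"
    using assms by (subst sum.union_disjoint[symmetric])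
      (auto intro: finite_subset arg_cong[where f="sum f"])
  also have "sum f ((X - A) \<inter> H) = (\<Sum>x\<in>X - A. f x * indicator H x)"
    using assms by (auto simp: sum.inter_restrict indicator_def intro!: sum.cong)
  finally show ?thesis .
qed

definition reported :: "(nat \<Rightarrow> nat \<times> nat) \<Rightarrow> nat \<Rightarrow> nat set" where
  "reported \<omega> T = (\<lambda>t. snd (\<omega> t)) ` {1..T}"

lemma known_set_eq: "known_set \<Theta>0 \<omega> T = \<Theta>0 \<union> reported \<omega> T"
  by (simp add: known_set_def reported_def)

lemma map_snd_step_pmf: "map_pmf snd (step_pmf p R) = bind_pmf p R"
  by (simp add: step_pmf_def map_bind_pmf bind_return_pmf')

lemma set_step_pmf_subset:
  assumes "set_pmf p \<subseteq> A" "\<And>m. m \<in> A \<Longrightarrow> set_pmf (R m) \<subseteq> B"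
  shows "set_pmf (step_pmf p R) \<subseteq> A \<times> B"
  using assms by (auto simp: step_pmf_def set_bind_pmf)

lemma reported_subset:
  assumes "set_pmf p \<subseteq> A" "\<And>m. m \<in> A \<Longrightarrow> set_pmf (R m) \<subseteq> B"
    and "\<omega> \<in> set_pmf (samples_pmf p R T)"
  shows "reported \<omega> T \<subseteq> B"
proof -
  have "\<omega> t \<in> A \<times> B" if "t \<in> {1..T}" for t
    using assms(3) that set_step_pmf_subset[of p A R B] assms(1,2)
    by (force simp: samples_pmf_def set_Pi_pmf PiE_dflt_def)
  then show ?thesis by (force simp: reported_def mem_Times_iff)
qed

lemma prob_step_misses:
  "measure_pmf.prob (step_pmf p R) {v. snd v \<noteq> \<theta>} = 1 - pmf (bind_pmf p R) \<theta>"
proof -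
  have "measure_pmf.prob (step_pmf p R) {v. snd v = \<theta>} = pmf (bind_pmf p R) \<theta>"
    by (simp add: measure_pmf_single[symmetric] map_snd_step_pmf[symmetric] vimage_def)
  then show ?thesis
    using measure_pmf.prob_compl[of "{v. snd v = \<theta>}" "step_pmf p R"]
    by (simp add: Compl_eq_Diff_UNIV[symmetric] Collect_neg_eq[symmetric])
qed

lemma prob_never_reported:
  "measure_pmf.prob (samples_pmf p R T) {\<omega>. \<theta> \<notin> reported \<omega> T}
     = (1 - pmf (bind_pmf p R) \<theta>) ^ T"
proof -
  have "{\<omega>. \<theta> \<notin> reported \<omega> T} = Pi {1..T} (\<lambda>_. {v. snd v \<noteq> \<theta>})"
    by (auto simp: reported_def Pi_def)
  then show ?thesis
    by (simp add: samples_pmf_def measure_Pi_pmf_Pi prob_step_misses)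
qed

lemma prob_reported:
  "measure_pmf.prob (samples_pmf p R T) {\<omega>. \<theta> \<in> reported \<omega> T}
     = 1 - (1 - pmf (bind_pmf p R) \<theta>) ^ T"
  using measure_pmf.prob_compl[of "{\<omega>. \<theta> \<in> reported \<omega> T}" "samples_pmf p R T"]
  by (simp add: prob_never_reported[symmetric] Compl_eq_Diff_UNIV[symmetric]
      Collect_neg_eq[symmetric])

lemma pmf_bind_eq_ptilde:
  assumes "set_pmf p \<subseteq> {1..M}"
  shows "pmf (bind_pmf p R) \<theta> = ptilde M p R \<theta>"
proof -
  have "pmf (bind_pmf p R) \<theta> = (\<integral>m. pmf (R m) \<theta> \<partial>measure_pmf p)"
    by (rule pmf_bind)
  also have "\<dots> = (\<Sum>m\<in>{1..M}. pmf p m * pmf (R m) \<theta>)"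
    using assms by (subst integral_measure_pmf[of "{1..M}"]) auto
  finally show ?thesis by (simp add: ptilde_def)
qed

lemma expectation_const_plus_sum_indicator:
  "measure_pmf.expectation N (\<lambda>\<omega>. c + (\<Sum>i\<in>I. f i * indicator (E i) \<omega>))
     = c + (\<Sum>i\<in>I. (f i :: real) * measure_pmf.prob N (E i))"
proof -
  have "integrable N (indicator A :: _ \<Rightarrow> real)" for A
    by (simp add: integrable_real_indicator less_top[symmetric])
  then show ?thesis
    by (subst Bochner_Integration.integral_add) simp_all
qed

lemma expectation_total_quality_known_set:
  assumes "set_pmf p \<subseteq> {1..M}" "\<And>m. m \<in> {1..M} \<Longrightarrow> set_pmf (R m) \<subseteq> {1..M}"
    and "\<Theta>0 \<subseteq> {1..M}"
  shows "measure_pmf.expectation (samples_pmf p R T)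
           (\<lambda>\<omega>. total_quality q (known_set \<Theta>0 \<omega> T))
         = total_quality q \<Theta>0 + (\<Sum>\<theta>\<in>{1..M} - \<Theta>0.
             q \<theta> * measure_pmf.prob (samples_pmf p R T) {\<omega>. \<theta> \<in> reported \<omega> T})"
proof -
  let ?S = "samples_pmf p R T"
  have "measure_pmf.expectation ?S (\<lambda>\<omega>. total_quality q (known_set \<Theta>0 \<omega> T))
      = measure_pmf.expectation ?S (\<lambda>\<omega>. total_quality q \<Theta>0 + (\<Sum>\<theta>\<in>{1..M} - \<Theta>0.
          q \<theta> * indicator {\<omega>. \<theta> \<in> reported \<omega> T} \<omega>))"
  proof (intro integral_cong_AE)
    have "total_quality q (known_set \<Theta>0 \<omega> T) = total_quality q \<Theta>0
        + (\<Sum>\<theta>\<in>{1..M} - \<Theta>0. q \<theta> * indicator {\<omega>. \<theta> \<in> reported \<omega> T} \<omega>)"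
      if "\<omega> \<in> set_pmf ?S" for \<omega>
    proof -
      have "reported \<omega> T \<subseteq> {1..M}"
        using reported_subset[of p "{1..M}" R "{1..M}"] assms(1,2) that by blast
      then show ?thesis
        using sum_union_eq_sum_indicator[of "{1..M}" \<Theta>0 "reported \<omega> T" q] assms(3)
        by (simp add: total_quality_def known_set_eq indicator_def)
    qed
    then show "AE \<omega> in ?S. total_quality q (known_set \<Theta>0 \<omega> T) = total_quality q \<Theta>0
        + (\<Sum>\<theta>\<in>{1..M} - \<Theta>0. q \<theta> * indicator {\<omega>. \<theta> \<in> reported \<omega> T} \<omega>)"
      by (simp add: AE_measure_pmf_iff)
  qed simp_all
  also have "\<dots> = total_quality q \<Theta>0 + (\<Sum>\<theta>\<in>{1..M} - \<Theta>0.
      q \<theta> * measure_pmf.prob ?S {\<omega>. \<theta> \<in> reported \<omega> T})"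
    by (rule expectation_const_plus_sum_indicator)
  finally show ?thesis .
qed

lemma sum_coverage_eq_quality_prevalence:
  "(\<Sum>\<theta>\<in>{1..M} - \<Theta>0. q \<theta> * (1 - (1 - pt \<theta>) ^ T))
     = - (\<Sum>k=1..T. (-1) ^ k * real (T choose k) * quality_prevalence M k \<Theta>0 pt q)"
proof -
  have "(\<Sum>\<theta>\<in>{1..M} - \<Theta>0. q \<theta> * (1 - (1 - pt \<theta>) ^ T))
      = - (\<Sum>\<theta>\<in>{1..M} - \<Theta>0. \<Sum>k=1..T. (-1) ^ k * real (T choose k) * (q \<theta> * pt \<theta> ^ k))"
    by (simp add: one_minus_power_eq_binomial_sum sum_distrib_left sum_negf mult_ac)
  also have "\<dots> = - (\<Sum>k=1..T. (-1) ^ k * real (T choose k) * quality_prevalence M k \<Theta>0 pt q)"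
    unfolding quality_prevalence_def by (subst sum.swap) (simp add: sum_distrib_left)
  finally show ?thesis .
qed

theorem proposition4p2:
  fixes M :: nat and p :: "nat pmf" and R :: "nat \<Rightarrow> nat pmf"
    and q :: "nat \<Rightarrow> real" and \<Theta>0 :: "nat set" and T :: nat
  assumes p_supp: "set_pmf p \<subseteq> {1..M}"
    and R_supp: "\<And>m. m \<in> {1..M} \<Longrightarrow> set_pmf (R m) \<subseteq> {1..M}"
    and \<Theta>0_sub: "\<Theta>0 \<subseteq> {1..M}"
    and T_pos: "0 < T"
  shows "measure_pmf.expectation (samples_pmf p R T)
           (\<lambda>\<omega>. total_quality q (known_set \<Theta>0 \<omega> T))
         = total_quality q \<Theta>0
           - (\<Sum>k=1..T. (-1) ^ k * real (T choose k)
                 * quality_prevalence M k \<Theta>0 (ptilde M p R) q)"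
proof -
  have "measure_pmf.expectation (samples_pmf p R T)
          (\<lambda>\<omega>. total_quality q (known_set \<Theta>0 \<omega> T))
        = total_quality q \<Theta>0 + (\<Sum>\<theta>\<in>{1..M} - \<Theta>0.
            q \<theta> * measure_pmf.prob (samples_pmf p R T) {\<omega>. \<theta> \<in> reported \<omega> T})"
    using p_supp R_supp \<Theta>0_sub by (rule expectation_total_quality_known_set)
  also have "\<dots> = total_quality q \<Theta>0
      + (\<Sum>\<theta>\<in>{1..M} - \<Theta>0. q \<theta> * (1 - (1 - ptilde M p R \<theta>) ^ T))"
    by (simp add: prob_reported pmf_bind_eq_ptilde[OF p_supp])
  also have "\<dots> = total_quality q \<Theta>0
      - (\<Sum>k=1..T. (-1) ^ k * real (T choose k) * quality_prevalence M k \<Theta>0 (ptilde M p R) q)"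
    by (subst sum_coverage_eq_quality_prevalence) simp
  finally show ?thesis .
qed

end
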